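(* In every state $\mathbf{x}$ of the common-chunk-protocol Markov process (with $k\ge 2$ chunks and any $\lambda>0$), for every chunk $i\in\{1,\dots,k\}$, \[ r\;\ge\;\frac{\bar S_i}{6}\, dS_i^+ \qquad\text{and}\qquad dS_i^+\le \frac{\bar S_i}{S}. \]
   Context: Model: Fix an integer $k\ge 2$ (number of chunks of a file) and $\lambda>0$. There is always exactly one seed holding all $k$ chunks. Non-seed peers arrive according to a Poisson process of rate $\lambda$, each arriving with no chunks; each non-seed peer holds a subset (its profile) of $\{1,\dots,k\}$ and leaves the system immediately once it holds all $k$ chunks. The state $\mathbf{x}$ of the continuous-time Markov process is the number of non-seed peers with each profile. $S$ denotes the total number of peers present, including the seed. Each non-seed peer has an independent rate-1 Poisson clock; at each tick it draws a sample of peers independently and uniformly at random with replacement from the current $S$ peers (seed and itself included) and may instantaneously download at most one chunk that it lacks and that is held by some sampled peer (such a chunk is a "match"). Counting draws with multiplicity, a chunk is "rare" in a sample of 3 draws if exactly one of the 3 draws holds it. Common chunk protocol: (i) a peer with no chunks draws 3 peers and downloads a chunk chosen uniformly among the rare matches, if there is any, otherwise nothing; (ii) a peer holding at least 1 and at most $k-2$ chunks draws 1 peer and downloads a uniformly chosen match, if any, otherwise nothing; (iii) a peer holding exactly $k-1$ chunks draws 3 peers and downloads its missing chunk only if that chunk is held by some draw and every chunk it holds is held by at least 2 of the 3 draws; otherwise nothing. Notation: $S_i$ ($1\le i\le k$) is the number of peers, including the seed, holding chunk $i$; $\bar S_i=S-S_i$. $r=r(\mathbf{x})$ is the total rate of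 download events in state $\mathbf{x}$, i.e. the sum over all non-seed peers of the probability that a clock tick of that peer results in a download. $dS_i^+=dS_i^+(\mathbf{x})$ is the probability that a clock tick of a peer holding no chunks results in that peer downloading chunk $i$. *)

theory Defs
  imports Complex_Main
begin

text \<open>Profiles are subsets of the chunk set {1..k}. A state x assigns to each
profile the number of non-seed peers with that profile (only proper subsets of
{1..k} can occur). The seed is a single extra peer with profile {1..k}.\<close>

definition chunks :: "nat \<Rightarrow> nat set" where
  "chunks k = {1..k}"

definition valid_state :: "nat \<Rightarrow> (nat set \<Rightarrow> nat) \<Rightarrow> bool" where
  "valid_state k x \<longleftrightarrow> (\<forall>A. x A \<noteq> 0 \<longrightarrow> A \<subset> chunks k)"

definition wt :: "nat \<Rightarrow> (nat set \<Rightarrow> nat) \<Rightarrow> nat set \<Rightarrow> real" where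
  "wt k x A = real (x A) + (if A = chunks k then 1 else 0)"

definition totS :: "nat \<Rightarrow> (nat set \<Rightarrow> nat) \<Rightarrow> real" where
  "totS k x = (\<Sum>A\<in>Pow (chunks k). wt k x A)"

definition Si :: "nat \<Rightarrow> (nat set \<Rightarrow> nat) \<Rightarrow> nat \<Rightarrow> real" where
  "Si k x i = (\<Sum>A\<in>{A\<in>Pow (chunks k). i \<in> A}. wt k x A)"

definition Sbar :: "nat \<Rightarrow> (nat set \<Rightarrow> nat) \<Rightarrow> nat \<Rightarrow> real" where
  "Sbar k x i = totS k x - Si k x i"

definition cnt3 :: "nat set \<Rightarrow> nat set \<Rightarrow> nat set \<Rightarrow> nat \<Rightarrow> nat" where
  "cnt3 A B C j = (if j \<in> A then 1 else 0) + (if j \<in> B then 1 else 0) + (if j \<in> C then 1 else 0)"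

definition rare_set :: "nat \<Rightarrow> nat set \<Rightarrow> nat set \<Rightarrow> nat set \<Rightarrow> nat set" where
  "rare_set k A B C = {j \<in> chunks k. cnt3 A B C j = 1}"

text \<open>Expected value of g over three independent uniform draws (with replacement)
from the S peers, the draws being recorded by their profiles.\<close>
definition exp3 :: "nat \<Rightarrow> (nat set \<Rightarrow> nat) \<Rightarrow> (nat set \<Rightarrow> nat set \<Rightarrow> nat set \<Rightarrow> real) \<Rightarrow> real" where
  "exp3 k x g = (\<Sum>A\<in>Pow (chunks k). \<Sum>B\<in>Pow (chunks k). \<Sum>C\<in>Pow (chunks k).
      wt k x A * wt k x B * wt k x C / totS k x ^ 3 * g A B C)"

text \<open>dS_i^+: probability that a tick of an empty peer downloads chunk i
(uniform choice among rare matches).\<close>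
definition dSplus :: "nat \<Rightarrow> (nat set \<Rightarrow> nat) \<Rightarrow> nat \<Rightarrow> real" where
  "dSplus k x i = exp3 k x (\<lambda>A B C. if i \<in> rare_set k A B C
      then 1 / real (card (rare_set k A B C)) else 0)"

text \<open>Probability that a tick of a peer with profile P results in a download.\<close>
definition dl_prob :: "nat \<Rightarrow> (nat set \<Rightarrow> nat) \<Rightarrow> nat set \<Rightarrow> real" where
  "dl_prob k x P =
    (if card P = 0 then
       exp3 k x (\<lambda>A B C. if rare_set k A B C \<noteq> {} then 1 else 0)
     else if card P \<le> k - 2 then
       (\<Sum>B\<in>{B\<in>Pow (chunks k). B - P \<noteq> {}}. wt k x B) / totS k x
     else if card P = k - 1 then
       exp3 k x (\<lambda>A B C. if (\<forall>m\<in>chunks k - P. cnt3 A B C m \<ge> 1)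
                              \<and> (\<forall>j\<in>P. cnt3 A B C j \<ge> 2) then 1 else 0)
     else 0)"

definition rate :: "nat \<Rightarrow> (nat set \<Rightarrow> nat) \<Rightarrow> real" where
  "rate k x = (\<Sum>P\<in>{P. P \<subset> chunks k}. real (x P) * dl_prob k x P)"

end

theory Submission
  imports Defs
begin

text \<open>
  Write S = totS, a = S_i and b = Sbar_i, so that a + b = S.  The proof has three parts.

  (1) An empty peer downloads chunk i only if i is rare in its three draws, i.e. exactly
  one draw holds i.  A union bound over which draw that is gives dS_i^+ <= 3 a b^2 / S^3,
  and 3ab <= (a + b)^2 = S^2 turns this into the second claim dS_i^+ <= b / S.

  (2) Only peers lacking chunk i are counted in the rate, split into three groups:
  e empty peers (each downloads with probability at least dS_i^+), f peers holding every
  chunk but i (each completes at least when the first draw holds i and the other two hold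
  all its chunks: probability >= a f^2 / S^3), and m remaining peers lacking i (one draw
  holding i suffices: probability >= a / S).  Since b = e + f + m, this gives
  r >= e dS_i^+ + q f^3 + q m b^2 with q = a / S^3.

  (3) An elementary inequality in e, f, m combines (1) and (2) into r >= b / 6 dS_i^+.
\<close>

lemma finite_profiles: "finite (Pow (chunks k))"
  by (simp add: chunks_def)

lemma wt_nonneg: "0 \<le> wt k x A"
  by (simp add: wt_def)

text \<open>The seed is always present, so the population is never empty.\<close>
lemma totS_ge_1: "1 \<le> totS k x"
proof -
  have "wt k x (chunks k) \<le> totS k x"
    unfolding totS_def by (rule member_le_sum) (auto simp: finite_profiles wt_nonneg chunks_def)
  moreover have "1 \<le> wt k x (chunks k)" by (simp add: wt_def)
  ultimately show ?thesis by linarith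
qed

lemma Si_indicator: "(\<Sum>A\<in>Pow (chunks k). wt k x A * (if i \<in> A then 1 else 0)) = Si k x i"
  unfolding Si_def
  by (simp add: sum.inter_filter[OF finite_profiles, symmetric] if_distrib cong: if_cong)

lemma Sbar_indicator: "(\<Sum>A\<in>Pow (chunks k). wt k x A * (if i \<in> A then 0 else 1)) = Sbar k x i"
proof -
  have "totS k x = (\<Sum>A\<in>Pow (chunks k). wt k x A * (if i \<in> A then 1 else 0))
      + (\<Sum>A\<in>Pow (chunks k). wt k x A * (if i \<in> A then 0 else 1))"
    unfolding totS_def sum.distrib[symmetric] by (intro sum.cong) auto
  then show ?thesis unfolding Sbar_def Si_indicator by simp
qed

lemma Si_nonneg: "0 \<le> Si k x i"
  unfolding Si_def by (intro sum_nonneg) (simp add: wt_nonneg)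

lemma Sbar_nonneg: "0 \<le> Sbar k x i"
  unfolding Sbar_indicator[symmetric] by (intro sum_nonneg) (simp add: wt_nonneg)

lemma exp3_mono:
  assumes "\<And>A B C. A \<in> Pow (chunks k) \<Longrightarrow> B \<in> Pow (chunks k) \<Longrightarrow> C \<in> Pow (chunks k)
             \<Longrightarrow> g A B C \<le> h A B C"
  shows "exp3 k x g \<le> exp3 k x h"
  unfolding exp3_def using totS_ge_1[of k x]
  by (intro sum_mono mult_left_mono) (simp_all add: assms wt_nonneg)

lemma exp3_nonneg:
  assumes "\<And>A B C. 0 \<le> g A B C"
  shows "0 \<le> exp3 k x g"
  unfolding exp3_def using totS_ge_1[of k x]
  by (intro sum_nonneg) (simp add: wt_nonneg assms)

lemma exp3_add: "exp3 k x (\<lambda>A B C. g A B C + h A B C) = exp3 k x g + exp3 k x h"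
  unfolding exp3_def by (simp add: distrib_left sum.distrib)

lemma exp3_product:
  "exp3 k x (\<lambda>A B C. f A * g B * h C) =
    (\<Sum>A\<in>Pow (chunks k). wt k x A * f A) * ((\<Sum>B\<in>Pow (chunks k). wt k x B * g B)
      * (\<Sum>C\<in>Pow (chunks k). wt k x C * h C)) / totS k x ^ 3"
  unfolding exp3_def sum_divide_distrib sum_distrib_right
  by (simp add: sum_distrib_left sum_divide_distrib mult_ac)

section \<open>Upper bounds on dS_i^+\<close>

text \<open>Pointwise union bound: if i is rare, exactly one of the three draws holds it, and an
  empty peer picks i with probability at most 1 among the rare matches.\<close>
lemma rare_choice_le_single_holder:
  "(if i \<in> rare_set k A B C then 1 / real (card (rare_set k A B C)) else 0)
   \<le> (if i \<in> A then 1 else 0) * (if i \<in> B then 0 else 1) * (if i \<in> C then 0 else 1)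
     + ((if i \<in> A then 0 else 1) * (if i \<in> B then 1 else 0) * (if i \<in> C then 0 else 1)
     + (if i \<in> A then 0 else 1) * (if i \<in> B then 0 else 1) * (if i \<in> C then 1 else (0::real)))"
proof (cases "i \<in> rare_set k A B C")
  case True
  then have "cnt3 A B C i = 1" by (simp add: rare_set_def)
  then have "(i \<in> A \<and> i \<notin> B \<and> i \<notin> C) \<or> (i \<notin> A \<and> i \<in> B \<and> i \<notin> C) \<or> (i \<notin> A \<and> i \<notin> B \<and> i \<in> C)"
    unfolding cnt3_def by (auto split: if_splits)
  moreover have "1 / real (card (rare_set k A B C)) \<le> 1"
    by (cases "card (rare_set k A B C)") auto
  ultimately show ?thesis using True by auto
qed simp

lemma dSplus_nonneg: "0 \<le> dSplus k x i"
  unfolding dSplus_def by (rule exp3_nonneg) simp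

lemma dSplus_union_bound: "dSplus k x i \<le> 3 * Si k x i * Sbar k x i ^ 2 / totS k x ^ 3"
proof -
  let ?h = "\<lambda>A::nat set. if i \<in> A then 1 else (0::real)"
  let ?n = "\<lambda>A::nat set. if i \<in> A then 0 else (1::real)"
  have "dSplus k x i \<le> exp3 k x (\<lambda>A B C. ?h A * ?n B * ?n C + (?n A * ?h B * ?n C + ?n A * ?n B * ?h C))"
    unfolding dSplus_def by (rule exp3_mono, rule rare_choice_le_single_holder)
  also have "\<dots> = exp3 k x (\<lambda>A B C. ?h A * ?n B * ?n C)
      + (exp3 k x (\<lambda>A B C. ?n A * ?h B * ?n C) + exp3 k x (\<lambda>A B C. ?n A * ?n B * ?h C))"
    by (simp only: exp3_add)
  also have "\<dots> = 3 * Si k x i * Sbar k x i ^ 2 / totS k x ^ 3"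
    unfolding exp3_product Si_indicator Sbar_indicator
    by (simp add: power2_eq_square add_divide_distrib[symmetric])
  finally show ?thesis .
qed

text \<open>The second claim of the theorem: from 3ab <= (a + b)^2 = S^2.\<close>
lemma dSplus_le_Sbar_ratio: "dSplus k x i \<le> Sbar k x i / totS k x"
proof -
  define a b S where "a = Si k x i" and "b = Sbar k x i" and "S = totS k x"
  have sum_ab: "S = a + b" by (simp add: a_def b_def S_def Sbar_def)
  have ab: "0 \<le> a" "0 \<le> b" by (simp_all add: a_def b_def Si_nonneg Sbar_nonneg)
  have S1: "1 \<le> S" by (simp add: S_def totS_ge_1)
  have "S ^ 2 - 3 * a * b = (a - b) ^ 2 + a * b"
    unfolding sum_ab by (simp add: power2_eq_square algebra_simps)
  then have "3 * a * b \<le> S ^ 2"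
    using zero_le_power2[of "a - b"] mult_nonneg_nonneg[OF ab] by linarith
  then have "3 * a * b * b / S ^ 3 \<le> S ^ 2 * b / S ^ 3"
    using ab S1 by (intro divide_right_mono mult_right_mono) auto
  also have "S ^ 2 * b / S ^ 3 = b / S"
    using S1 by (simp add: power2_eq_square power3_eq_cube)
  finally have "3 * a * b ^ 2 / S ^ 3 \<le> b / S" by (simp add: power2_eq_square mult.assoc)
  then show ?thesis using dSplus_union_bound[of k x i] unfolding a_def b_def S_def by linarith
qed

section \<open>Lower bounds on the download probabilities of peers lacking chunk i\<close>

text \<open>Download probabilities are nonnegative, so peers may be dropped from the rate.\<close>
lemma dl_prob_nonneg: "0 \<le> dl_prob k x P"
  unfolding dl_prob_def using totS_ge_1[of k x]
  by (auto intro!: exp3_nonneg divide_nonneg_pos sum_nonneg simp: wt_nonneg)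

text \<open>An empty peer downloads whenever its sample contains a rare chunk, in particular
  whenever it downloads chunk i.\<close>
lemma dSplus_le_dl_prob_empty: "dSplus k x i \<le> dl_prob k x {}"
  unfolding dl_prob_def dSplus_def
proof (simp, rule exp3_mono)
  fix A B C
  show "(if i \<in> rare_set k A B C then 1 / real (card (rare_set k A B C)) else 0)
        \<le> (if rare_set k A B C \<noteq> {} then 1 else (0::real))"
    by (cases "card (rare_set k A B C)") auto
qed

text \<open>A peer with between 1 and k-2 chunks, lacking i, downloads at least when its single
  draw holds chunk i.\<close>
lemma dl_prob_partial_ge:
  assumes "card P \<noteq> 0" "card P \<le> k - 2" "i \<notin> P"
  shows "Si k x i / totS k x \<le> dl_prob k x P"
proof -
  have "Si k x i \<le> (\<Sum>B\<in>{B\<in>Pow (chunks k). B - P \<noteq> {}}. wt k x B)"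
    unfolding Si_def by (rule sum_mono2) (use assms(3) finite_profiles in \<open>auto simp: wt_nonneg\<close>)
  then show ?thesis using assms totS_ge_1[of k x]
    unfolding dl_prob_def by (simp add: divide_right_mono)
qed

text \<open>A peer lacking only chunk i holds k - 1 chunks, so it follows rule (iii).\<close>
lemma card_chunks_minus: "i \<in> chunks k \<Longrightarrow> card (chunks k - {i}) = k - 1"
  by (simp add: chunks_def)

text \<open>A peer holding every chunk except i completes at least when the first draw holds i
  and both other draws hold all of its chunks, e.g. have the same profile (or the seed's).\<close>
lemma dl_prob_last_ge:
  assumes "2 \<le> k" "i \<in> chunks k"
  shows "Si k x i * real (x (chunks k - {i})) ^ 2 / totS k x ^ 3 \<le> dl_prob k x (chunks k - {i})"
proof -
  let ?P = "chunks k - {i}"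
  let ?h = "\<lambda>A::nat set. if i \<in> A then 1 else (0::real)"
  let ?g = "\<lambda>A::nat set. if ?P \<subseteq> A then 1 else (0::real)"
  define G where "G = (\<Sum>B\<in>Pow (chunks k). wt k x B * ?g B)"
  have card_P: "card ?P = k - 1" using card_chunks_minus[OF assms(2)] .
  have "Si k x i * (G * G) / totS k x ^ 3 = exp3 k x (\<lambda>A B C. ?h A * ?g B * ?g C)"
    unfolding exp3_product Si_indicator G_def by simp
  also have "\<dots> \<le> exp3 k x (\<lambda>A B C. if (\<forall>m\<in>chunks k - ?P. cnt3 A B C m \<ge> 1)
                              \<and> (\<forall>j\<in>?P. cnt3 A B C j \<ge> 2) then 1 else 0)"
    by (rule exp3_mono) (use assms(2) in \<open>auto simp: cnt3_def\<close>)
  also have "\<dots> = dl_prob k x ?P"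
  proof -
    have middle_cases: "(k - 1 = 0) = False" "(k - 1 \<le> k - 2) = False" using assms(1) by auto
    show ?thesis by (simp only: dl_prob_def card_P middle_cases if_False if_True simp_thms(6))
  qed
  finally have last: "Si k x i * (G * G) / totS k x ^ 3 \<le> dl_prob k x ?P" .
  have "wt k x ?P * ?g ?P \<le> G"
    unfolding G_def by (rule member_le_sum) (auto simp: finite_profiles wt_nonneg chunks_def)
  moreover have "wt k x ?P = x ?P" using assms(2) by (auto simp: wt_def)
  ultimately have "real (x ?P) ^ 2 \<le> G * G" by (simp add: power2_eq_square mult_mono)
  then have "Si k x i * real (x ?P) ^ 2 / totS k x ^ 3 \<le> Si k x i * (G * G) / totS k x ^ 3"
    using Si_nonneg[of k x i] totS_ge_1[of k x] by (intro divide_right_mono mult_left_mono) auto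
  with last show ?thesis by linarith
qed

section \<open>Decomposing the rate over the peers lacking chunk i\<close>

definition lacking :: "nat \<Rightarrow> nat \<Rightarrow> nat set set" where
  "lacking k i = {P \<in> Pow (chunks k). i \<notin> P}"

definition partial_lacking :: "nat \<Rightarrow> nat \<Rightarrow> nat set set" where
  "partial_lacking k i = lacking k i - {{}, chunks k - {i}}"

lemma sum_split_two:
  assumes "finite A" "a \<in> A" "b \<in> A" "a \<noteq> b"
  shows "sum g A = g a + g b + sum g (A - {a, b})"
proof -
  have "sum g A = g a + sum g (A - {a})" using assms by (simp add: sum.remove)
  also have "sum g (A - {a}) = g b + sum g (A - {a} - {b})" using assms by (simp add: sum.remove)
  also have "A - {a} - {b} = A - {a, b}" by auto
  finally show ?thesis by (simp add: add.assoc)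
qed

text \<open>For k >= 2 the empty profile and the profile of all chunks but i are distinct, so a
  sum over the profiles lacking i splits into the three groups of the proof.\<close>
lemma lacking_split:
  assumes "2 \<le> k" "i \<in> chunks k"
  shows "sum g (lacking k i) = g {} + g (chunks k - {i}) + sum g (partial_lacking k i)"
proof -
  have "card (chunks k - {i}) \<noteq> 0" using assms(1) card_chunks_minus[OF assms(2)] by simp
  then have "chunks k - {i} \<noteq> {}" by (metis card.empty)
  moreover have "finite (lacking k i)" unfolding lacking_def using finite_profiles by simp
  ultimately show ?thesis unfolding partial_lacking_def
    by (intro sum_split_two) (auto simp: lacking_def)
qed

text \<open>The remaining profiles lacking i hold between 1 and k - 2 chunks (rule (ii)).\<close>
lemma partial_lacking_card:
  assumes "i \<in> chunks k" "P \<in> partial_lacking k i"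
  shows "card P \<noteq> 0" "card P \<le> k - 2" "i \<notin> P"
proof -
  have P: "P \<subset> chunks k - {i}" "P \<noteq> {}" "i \<notin> P"
    using assms(2) by (auto simp: partial_lacking_def lacking_def)
  have "finite (chunks k - {i})" by (simp add: chunks_def)
  then have "card P < k - 1" using psubset_card_mono[OF _ P(1)] card_chunks_minus[OF assms(1)] by simp
  then show "card P \<le> k - 2" by simp
  show "card P \<noteq> 0" using P \<open>finite (chunks k - {i})\<close> by (auto dest: finite_subset)
  show "i \<notin> P" by (fact P(3))
qed

lemma Sbar_eq_lacking:
  assumes "i \<in> chunks k"
  shows "Sbar k x i = (\<Sum>P\<in>lacking k i. real (x P))"
proof -
  have "Sbar k x i = (\<Sum>A\<in>Pow (chunks k). if i \<notin> A then wt k x A else 0)"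
    unfolding Sbar_indicator[symmetric] by (intro sum.cong) auto
  also have "\<dots> = (\<Sum>P\<in>lacking k i. wt k x P)"
    unfolding lacking_def by (rule sum.inter_filter[OF finite_profiles, symmetric])
  also have "\<dots> = (\<Sum>P\<in>lacking k i. real (x P))"
    using assms by (intro sum.cong) (auto simp: lacking_def wt_def)
  finally show ?thesis .
qed

lemma rate_ge_lacking:
  assumes "i \<in> chunks k"
  shows "(\<Sum>P\<in>lacking k i. real (x P) * dl_prob k x P) \<le> rate k x"
  unfolding rate_def using assms
  by (intro sum_mono2) (auto simp: lacking_def dl_prob_nonneg chunks_def intro: finite_subset)

text \<open>Since Sbar_i <= S, one draw holding i is at least as likely as the event
  "first draw holds i, the other two lack it" used in the union bound.\<close>
lemma Si_Sbar_sq_le: "Si k x i * Sbar k x i ^ 2 / totS k x ^ 3 \<le> Si k x i / totS k x"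
proof -
  have S: "1 \<le> totS k x" by (rule totS_ge_1)
  have "Sbar k x i ^ 2 \<le> totS k x ^ 2"
    using Si_nonneg[of k x i] Sbar_nonneg[of k x i] by (intro power_mono) (auto simp: Sbar_def)
  then have "Si k x i * Sbar k x i ^ 2 / totS k x ^ 3 \<le> Si k x i * totS k x ^ 2 / totS k x ^ 3"
    using S Si_nonneg[of k x i] by (intro divide_right_mono mult_left_mono) auto
  also have "\<dots> = Si k x i / totS k x" using S by (simp add: power2_eq_square power3_eq_cube)
  finally show ?thesis .
qed

lemma rate_lower_bound:
  fixes x :: "nat set \<Rightarrow> nat"
  assumes "2 \<le> k" "i \<in> chunks k"
  defines "q \<equiv> Si k x i / totS k x ^ 3"
  shows "real (x {}) * dSplus k x i + q * real (x (chunks k - {i})) ^ 3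
           + q * (\<Sum>P\<in>partial_lacking k i. real (x P)) * Sbar k x i ^ 2 \<le> rate k x"
proof -
  let ?f = "\<lambda>P. real (x P) * dl_prob k x P"
  have "(\<Sum>P\<in>partial_lacking k i. real (x P)) * (q * Sbar k x i ^ 2) \<le> sum ?f (partial_lacking k i)"
    unfolding sum_distrib_right
  proof (intro sum_mono mult_left_mono)
    fix P assume "P \<in> partial_lacking k i"
    then have "Si k x i / totS k x \<le> dl_prob k x P"
      by (intro dl_prob_partial_ge) (auto simp: partial_lacking_card[OF assms(2)])
    then show "q * Sbar k x i ^ 2 \<le> dl_prob k x P"
      using Si_Sbar_sq_le[of k x i] by (simp add: q_def)
  qed simp
  moreover have "real (x {}) * dSplus k x i \<le> ?f {}"
    by (intro mult_left_mono dSplus_le_dl_prob_empty) auto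
  moreover have "q * real (x (chunks k - {i})) ^ 3 \<le> ?f (chunks k - {i})"
  proof -
    have "q * real (x (chunks k - {i})) ^ 3
        = real (x (chunks k - {i})) * (Si k x i * real (x (chunks k - {i})) ^ 2 / totS k x ^ 3)"
      by (simp add: q_def power2_eq_square power3_eq_cube)
    also have "\<dots> \<le> ?f (chunks k - {i})" by (intro mult_left_mono dl_prob_last_ge assms) auto
    finally show ?thesis .
  qed
  ultimately show ?thesis
    using rate_ge_lacking[OF assms(2), of x] lacking_split[OF assms(1,2), of ?f]
    by (simp add: mult_ac)
qed

text \<open>Part (3): with b = e + f + m and d <= 3 q b^2, the weight b / 6 on d is absorbed by the
  three groups.  If f <= e + m the empty and partial peers suffice; otherwise the excess
  f - u, where u = e + m, is paid for by q f^3, using (f - u)(f + u)^2 <= 2 f^3 for 0 <= u <= f.\<close>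
lemma download_tradeoff:
  fixes e f m d q :: real
  assumes "0 \<le> e" "0 \<le> f" "0 \<le> m" "0 \<le> q" "0 \<le> d" "d \<le> 3 * q * (e + f + m) ^ 2"
  shows "(e + f + m) / 6 * d \<le> e * d + q * f ^ 3 + q * m * (e + f + m) ^ 2"
proof -
  define b where "b = e + f + m"
  define u where "u = e + m"
  have u_part: "u / 3 * d \<le> e * d + q * m * b ^ 2"
  proof -
    have "m * d \<le> m * (3 * q * b ^ 2)" using assms by (intro mult_left_mono) (auto simp: b_def)
    moreover have "u / 3 * d = e * d / 3 + m * d / 3" by (simp add: u_def field_simps)
    moreover have "0 \<le> e * d" using assms by simp
    ultimately show ?thesis by (simp add: mult.commute)
  qed
  show ?thesis
  proof (cases "f \<le> u")
    case True
    then have "b / 6 * d \<le> u / 3 * d" using assms by (intro mult_right_mono) (auto simp: b_def u_def)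
    moreover have "0 \<le> q * f ^ 3" using assms by simp
    ultimately show ?thesis using u_part unfolding b_def by linarith
  next
    case False
    have u_nonneg: "0 \<le> u" using assms by (simp add: u_def)
    have cubic: "(f - u) * (f + u) ^ 2 \<le> 2 * f ^ 3"
    proof -
      have "2 * f ^ 3 - (f - u) * (f + u) ^ 2 = f ^ 2 * (f - u) + f * u ^ 2 + u ^ 3"
        by (simp add: power2_eq_square power3_eq_cube algebra_simps)
      moreover have "0 \<le> f ^ 2 * (f - u) + f * u ^ 2 + u ^ 3" using False u_nonneg assms by simp
      ultimately show ?thesis by linarith
    qed
    have "(f - u) * d \<le> (f - u) * (3 * q * b ^ 2)"
      using False assms by (intro mult_left_mono) (auto simp: b_def)
    also have "\<dots> = 3 * q * ((f - u) * (f + u) ^ 2)" by (simp add: b_def u_def algebra_simps)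
    also have "\<dots> \<le> 3 * q * (2 * f ^ 3)" using cubic assms by (intro mult_left_mono) auto
    finally have "(f - u) / 6 * d \<le> q * f ^ 3" by simp
    moreover have "b / 6 * d = u / 3 * d + (f - u) / 6 * d" by (simp add: b_def u_def field_simps)
    ultimately show ?thesis using u_part unfolding b_def by linarith
  qed
qed

theorem mainTheorem4:
  fixes k :: nat and lambda :: real and x :: "nat set \<Rightarrow> nat" and i :: nat
  assumes "k \<ge> 2" and "lambda > 0" and "valid_state k x" and "i \<in> {1..k}"
  shows "rate k x \<ge> Sbar k x i / 6 * dSplus k x i \<and> dSplus k x i \<le> Sbar k x i / totS k x"
proof
  show "dSplus k x i \<le> Sbar k x i / totS k x" by (rule dSplus_le_Sbar_ratio)
  have i: "i \<in> chunks k" using assms(4) by (simp add: chunks_def)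
  define e f m q where "e = real (x {})" and "f = real (x (chunks k - {i}))"
    and "m = (\<Sum>P\<in>partial_lacking k i. real (x P))" and "q = Si k x i / totS k x ^ 3"
  have Sbar_split: "Sbar k x i = e + f + m"
    unfolding Sbar_eq_lacking[OF i] lacking_split[OF assms(1) i] e_def f_def m_def ..
  have "Sbar k x i / 6 * dSplus k x i \<le> e * dSplus k x i + q * f ^ 3 + q * m * Sbar k x i ^ 2"
    unfolding Sbar_split
  proof (rule download_tradeoff)
    show "0 \<le> e" "0 \<le> f" "0 \<le> m" by (simp_all add: e_def f_def m_def sum_nonneg)
    show "0 \<le> q" using totS_ge_1[of k x] by (simp add: q_def Si_nonneg)
    show "0 \<le> dSplus k x i" by (rule dSplus_nonneg)
    show "dSplus k x i \<le> 3 * q * (e + f + m) ^ 2"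
      using dSplus_union_bound[of k x i] by (simp add: q_def Sbar_split)
  qed
  also have "\<dots> \<le> rate k x"
    unfolding e_def f_def m_def q_def by (rule rate_lower_bound[OF assms(1) i])
  finally show "Sbar k x i / 6 * dSplus k x i \<le> rate k x" .
qed

end
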